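(* For every $\varepsilon\in(0,2)$ there exists $\varepsilon'\in(0,2)$ such that the following holds: if $f:[0,\infty)\to[0,\infty)$ is a monotone function belonging to the Gurov–Reshetnyak class $\mathcal{GR}_{\mathbb R_+}(\varepsilon)$, then its even extension $\tilde f:\mathbb R\to[0,\infty)$, $\tilde f(x)=f(|x|)$, belongs to $\mathcal{GR}_{\mathbb R}(\varepsilon')$.
   Context: Let $R$ be either $\mathbb R$ or $\mathbb R_+=[0,\infty)$. For a non-negative function $f$ that is locally summable on $R$ (i.e. summable on each bounded subinterval of $R$) and a bounded interval $I\subset R$, put $f_I=\frac1{|I|}\int_I f(x)\,dx$ and $\Omega(f;I)=\frac1{|I|}\int_I|f(x)-f_I|\,dx$, where $|I|$ is the length of $I$. For $\varepsilon\in(0,2]$, the Gurov–Reshetnyak class $\mathcal{GR}_R(\varepsilon)$ is the set of all non-negative locally summable functions $f$ on $R$ such that $\Omega(f;I)\le\varepsilon f_I$ for all bounded intervals $I\subset R$. *)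

theory Defs
  imports "HOL-Analysis.Analysis"
begin

definition avg :: "(real \<Rightarrow> real) \<Rightarrow> real \<Rightarrow> real \<Rightarrow> real" where
  "avg f a b = (LINT x:{a..b}|lborel. f x) / (b - a)"

definition mean_osc :: "(real \<Rightarrow> real) \<Rightarrow> real \<Rightarrow> real \<Rightarrow> real" where
  "mean_osc f a b = (LINT x:{a..b}|lborel. \<bar>f x - avg f a b\<bar>) / (b - a)"

text \<open>Endpoints have measure zero, so closed intervals suffice.\<close>
definition GR :: "real set \<Rightarrow> real \<Rightarrow> (real \<Rightarrow> real) \<Rightarrow> bool" where
  "GR R eps f \<longleftrightarrow>
     (\<forall>x\<in>R. 0 \<le> f x) \<and>
     (\<forall>a b. a \<in> R \<longrightarrow> b \<in> R \<longrightarrow> set_integrable lborel {a..b} f) \<and>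
     (\<forall>a b. a \<in> R \<longrightarrow> b \<in> R \<longrightarrow> a < b \<longrightarrow> mean_osc f a b \<le> eps * avg f a b)"

end

theory Submission
  imports Defs
begin

text \<open>
  Write \<open>g\<close> for the even extension and \<open>g\<^sub>I\<close> for its mean over \<open>I\<close>. Since
  \<open>\<bar>u - c\<bar> = u + c - 2 min u c\<close>, the condition \<open>\<Omega>(g;I) \<le> \<epsilon> g\<^sub>I\<close> says exactly that
  \<open>\<integral>\<^sub>I min g g\<^sub>I \<ge> (1 - \<epsilon>/2) \<integral>\<^sub>I g\<close>, and this lower mass behaves well under enlarging
  the interval. Intervals on one side of \<open>0\<close> are handled by \<open>f\<close> itself (after a reflection).
  An interval \<open>J\<close> containing \<open>0\<close> contains a half \<open>K\<close> on one side of \<open>0\<close> with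
  \<open>|J| \<le> 2|K|\<close> and, by evenness, \<open>\<integral>\<^sub>J g \<le> 2 \<integral>\<^sub>K g\<close>; passing from \<open>K\<close> to \<open>J\<close> costs at
  most a factor \<open>2\<close> in the constant \<open>1 - \<epsilon>/2\<close>, so \<open>\<epsilon>' = 1 + \<epsilon>/2\<close> works.
\<close>

lemma set_integral_const_Icc:
  "(a::real) \<le> b \<Longrightarrow> (LINT x:{a..b}|lborel. (c::real)) = c * (b - a)"
  by (subst set_integral_const) (auto simp: measure_lborel_Icc)

lemma set_integral_nonneg:
  fixes h :: "'a \<Rightarrow> real"
  assumes "\<And>x. x \<in> A \<Longrightarrow> 0 \<le> h x"
  shows "0 \<le> (LINT x:A|M. h x)"
  unfolding set_lebesgue_integral_def
  using assms by (intro Bochner_Integration.integral_nonneg) (auto simp: indicator_def)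

lemma set_integral_mono_set_nonneg:
  fixes h :: "'a \<Rightarrow> real"
  assumes "K \<subseteq> J" "set_integrable M J h" "set_integrable M K h" "\<And>x. x \<in> J \<Longrightarrow> 0 \<le> h x"
  shows "(LINT x:K|M. h x) \<le> (LINT x:J|M. h x)"
  using assms unfolding set_lebesgue_integral_def set_integrable_def
  by (intro integral_mono) (auto split: split_indicator)

lemma set_integral_split_Icc:
  fixes h :: "real \<Rightarrow> real"
  assumes "a \<le> c" "c \<le> b" "set_integrable lborel {a..c} h" "set_integrable lborel {c..b} h"
  shows "(LINT x:{a..b}|lborel. h x) = (LINT x:{a..c}|lborel. h x) + (LINT x:{c..b}|lborel. h x)"
proof -
  have "{a..b} = {a..c} \<union> {c..b}" using assms by auto
  moreover have "(LINT x:{a..c} \<union> {c..b}|lborel. h x)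
      = (LINT x:{a..c}|lborel. h x) + (LINT x:{c..b}|lborel. h x)"
    by (rule set_integral_Un_AE) (use assms AE_lborel_singleton[of c] in \<open>auto elim: eventually_mono\<close>)
  ultimately show ?thesis by simp
qed

lemma set_integral_min_const:
  fixes g :: "real \<Rightarrow> real"
  assumes g: "set_integrable lborel {a..b} g" and "a \<le> b"
  shows "set_integrable lborel {a..b} (\<lambda>x. min (g x) c)"
    and "(LINT x:{a..b}|lborel. min (g x) c) =
          ((LINT x:{a..b}|lborel. g x) + c * (b - a) - (LINT x:{a..b}|lborel. \<bar>g x - c\<bar>)) / 2"
proof -
  have const: "set_integrable lborel {a..b} (\<lambda>x. c)"
    by (intro borel_integrable_atLeastAtMost' continuous_on_const)
  have min_eq: "(\<lambda>x. min (g x) c) = (\<lambda>x. (1/2) * ((g x + c) - \<bar>g x - c\<bar>))"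
    by (auto simp: min_def fun_eq_iff)
  have sum: "set_integrable lborel {a..b} (\<lambda>x. g x + c)"
    using g const by (rule set_integral_add(1))
  have dist: "set_integrable lborel {a..b} (\<lambda>x. \<bar>g x - c\<bar>)"
    by (rule set_integrable_abs, rule set_integral_diff(1)[OF g const])
  show "set_integrable lborel {a..b} (\<lambda>x. min (g x) c)"
    unfolding min_eq by (rule set_integrable_mult_right, rule set_integral_diff(1)[OF sum dist])
  have "(LINT x:{a..b}|lborel. min (g x) c)
      = (1/2) * ((LINT x:{a..b}|lborel. g x + c) - (LINT x:{a..b}|lborel. \<bar>g x - c\<bar>))"
    unfolding min_eq using sum dist by (simp add: set_integral_diff(2))
  also have "(LINT x:{a..b}|lborel. g x + c) = (LINT x:{a..b}|lborel. g x) + c * (b - a)"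
    using g const set_integral_const_Icc[OF \<open>a \<le> b\<close>] by (simp add: set_integral_add(2))
  finally show "(LINT x:{a..b}|lborel. min (g x) c) =
      ((LINT x:{a..b}|lborel. g x) + c * (b - a) - (LINT x:{a..b}|lborel. \<bar>g x - c\<bar>)) / 2"
    by simp
qed

lemma mean_osc_le_iff_min_avg:
  fixes g :: "real \<Rightarrow> real"
  assumes "a < b" and g: "set_integrable lborel {a..b} g"
  shows "mean_osc g a b \<le> e * avg g a b \<longleftrightarrow>
         (1 - e/2) * (LINT x:{a..b}|lborel. g x) \<le> (LINT x:{a..b}|lborel. min (g x) (avg g a b))"
proof -
  define I where "I = (LINT x:{a..b}|lborel. g x)"
  define Osc where "Osc = (LINT x:{a..b}|lborel. \<bar>g x - avg g a b\<bar>)"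
  have "avg g a b * (b - a) = I" using \<open>a < b\<close> by (simp add: avg_def I_def)
  then have min_avg: "(LINT x:{a..b}|lborel. min (g x) (avg g a b)) = (2 * I - Osc) / 2"
    using set_integral_min_const(2)[OF g, of "avg g a b"] \<open>a < b\<close> by (simp add: I_def Osc_def)
  have "mean_osc g a b \<le> e * avg g a b \<longleftrightarrow> Osc / (b - a) \<le> (e * I) / (b - a)"
    by (simp add: mean_osc_def avg_def Osc_def I_def)
  also have "\<dots> \<longleftrightarrow> Osc \<le> e * I" using \<open>a < b\<close> by (simp add: divide_le_cancel)
  also have "\<dots> \<longleftrightarrow> (1 - e/2) * I \<le> (2 * I - Osc) / 2" by (simp add: field_simps)
  finally show ?thesis by (simp only: min_avg I_def)
qed

lemma avg_nonneg:
  "(\<And>x. x \<in> {a..b} \<Longrightarrow> 0 \<le> g x) \<Longrightarrow> a \<le> b \<Longrightarrow> 0 \<le> avg g a b"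
  unfolding avg_def by (intro divide_nonneg_nonneg set_integral_nonneg) auto

lemma min_scaled_le_min:
  fixes u m M :: real
  assumes "0 \<le> u" "0 \<le> m" "0 \<le> M"
  shows "min 1 (m / M) * min u M \<le> min u m"
proof (cases "M \<le> m")
  case True
  then show ?thesis using assms by (auto simp: min_def)
next
  case False
  then have "min 1 (m / M) = m / M" using assms by simp
  moreover have "m / M * min u M \<le> 1 * u"
    using assms False by (intro mult_mono) auto
  moreover have "m / M * min u M \<le> m"
    using assms False by (simp add: divide_le_eq mult_left_mono)
  ultimately show ?thesis by simp
qed

lemma mean_osc_le_of_large_subinterval:
  fixes g :: "real \<Rightarrow> real"
  assumes "c < d" "a \<le> c" "d \<le> b" and length: "b - a \<le> 2 * (d - c)"
    and g: "set_integrable lborel {a..b} g" and nonneg: "\<And>x. x \<in> {a..b} \<Longrightarrow> 0 \<le> g x"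
    and mass: "(LINT x:{a..b}|lborel. g x) \<le> 2 * (LINT x:{c..d}|lborel. g x)"
    and "e \<le> 2" and osc: "mean_osc g c d \<le> e * avg g c d"
  shows "mean_osc g a b \<le> (1 + e/2) * avg g a b"
proof -
  define \<delta> where "\<delta> = 1 - e/2"
  define IJ where "IJ = (LINT x:{a..b}|lborel. g x)"
  define IK where "IK = (LINT x:{c..d}|lborel. g x)"
  define m where "m = avg g a b"
  define M where "M = avg g c d"
  define q where "q = min 1 (m / M)"
  have sub: "{c..d} \<subseteq> {a..b}" using assms by auto
  have gK: "set_integrable lborel {c..d} g" using set_integrable_subset[OF g _ sub] by simp
  have "0 \<le> m" "0 \<le> M" using assms sub nonneg by (auto simp: m_def M_def intro!: avg_nonneg)
  have "0 \<le> \<delta>" "0 \<le> q" using \<open>e \<le> 2\<close> \<open>0 \<le> m\<close> \<open>0 \<le> M\<close> by (auto simp: \<delta>_def q_def)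
  have lower_K: "\<delta> * IK \<le> (LINT x:{c..d}|lborel. min (g x) M)"
    using osc mean_osc_le_iff_min_avg[OF \<open>c < d\<close> gK] by (simp add: \<delta>_def IK_def M_def)
  have IJ: "IJ = m * (b - a)" and IK: "IK = M * (d - c)"
    using assms by (simp_all add: m_def M_def avg_def IJ_def IK_def)
  \<comment> \<open>If \<open>M > m\<close>, lowering the level from \<open>M\<close> to \<open>m\<close> loses at most the factor \<open>m/M\<close>,
    and \<open>(m/M) \<integral>\<^sub>K g = m |K| \<ge> m |J| / 2 = \<integral>\<^sub>J g / 2\<close>.\<close>
  have half_mass: "IJ \<le> 2 * (q * IK)"
  proof (cases "M \<le> m")
    case True
    then have "q * IK = IK" using \<open>0 \<le> M\<close> by (cases "M = 0") (auto simp: q_def IK)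
    moreover have "IJ \<le> 2 * IK" using mass by (simp only: IJ_def IK_def)
    ultimately show ?thesis by (simp only:)
  next
    case False
    then have "q * IK = m * (d - c)" using \<open>0 \<le> m\<close> by (simp add: q_def IK)
    moreover have "m * (b - a) \<le> m * (2 * (d - c))" using length \<open>0 \<le> m\<close> by (rule mult_left_mono)
    ultimately show ?thesis by (simp add: IJ algebra_simps)
  qed
  have "(\<delta>/2) * IJ \<le> q * (\<delta> * IK)"
    using mult_left_mono[OF half_mass \<open>0 \<le> \<delta>\<close>] by (simp add: algebra_simps)
  also have "\<dots> \<le> q * (LINT x:{c..d}|lborel. min (g x) M)"
    using lower_K \<open>0 \<le> q\<close> by (rule mult_left_mono)
  also have "\<dots> = (LINT x:{c..d}|lborel. q * min (g x) M)" by simp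
  also have "\<dots> \<le> (LINT x:{c..d}|lborel. min (g x) m)"
    using \<open>c < d\<close> unfolding q_def
    by (intro set_integral_mono set_integrable_mult_right set_integral_min_const(1)[OF gK]
        min_scaled_le_min \<open>0 \<le> m\<close> \<open>0 \<le> M\<close>) (use sub nonneg in auto)
  also have "\<dots> \<le> (LINT x:{a..b}|lborel. min (g x) m)"
    using assms \<open>0 \<le> m\<close>
    by (intro set_integral_mono_set_nonneg[OF sub] set_integral_min_const(1)[OF g]
        set_integral_min_const(1)[OF gK]) auto
  finally have "(1 - (1 + e/2) / 2) * IJ \<le> (LINT x:{a..b}|lborel. min (g x) m)"
    by (simp add: \<delta>_def field_simps)
  then show ?thesis
    using mean_osc_le_iff_min_avg[of a b g] g assms by (simp add: IJ_def m_def)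
qed

lemma set_integral_reflect_Icc:
  fixes h :: "real \<Rightarrow> real"
  shows "(LINT x:{c..d}|lborel. h (- x)) = (LINT x:{-d..-c}|lborel. h x)"
proof -
  have "{x. - x \<in> {-d..-c}} = {c..d}" by auto
  then show ?thesis using set_integral_reflect[of "{-d..-c}" h] by simp
qed

lemma set_integrable_reflect_Icc:
  fixes h :: "real \<Rightarrow> real"
  assumes "set_integrable lborel {-d..-c} h"
  shows "set_integrable lborel {c..d} (\<lambda>x. h (- x))"
proof -
  have "integrable lborel (\<lambda>x. indicator {-d..-c} (0 + (-1) * x) *\<^sub>R h (0 + (-1) * x))"
    using assms unfolding set_integrable_def by (subst lborel_integrable_real_affine_iff) auto
  moreover have "(\<lambda>x. indicator {-d..-c} (0 + (-1) * x) *\<^sub>R h (0 + (-1) * x))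
      = (\<lambda>x. indicator {c..d} x *\<^sub>R h (- x))"
    by (auto simp: fun_eq_iff split: split_indicator)
  ultimately show ?thesis unfolding set_integrable_def by simp
qed

lemma avg_reflect: "avg (\<lambda>x. h (- x)) c d = avg h (-d) (-c)"
  by (simp add: avg_def set_integral_reflect_Icc)

lemma mean_osc_reflect: "mean_osc (\<lambda>x. h (- x)) c d = mean_osc h (-d) (-c)"
  using set_integral_reflect_Icc[where h="\<lambda>x. \<bar>h x - avg h (-d) (-c)\<bar>" and c=c and d=d]
  by (simp add: mean_osc_def avg_reflect)

lemma avg_cong: "(\<And>x. x \<in> {a..b} \<Longrightarrow> f x = g x) \<Longrightarrow> avg f a b = avg g a b"
  unfolding avg_def by (subst set_lebesgue_integral_cong[of "{a..b}" lborel f g]) auto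

lemma mean_osc_cong:
  "(\<And>x. x \<in> {a..b} \<Longrightarrow> f x = g x) \<Longrightarrow> mean_osc f a b = mean_osc g a b"
  unfolding mean_osc_def using avg_cong[of a b f g]
  by (subst set_lebesgue_integral_cong[of "{a..b}" lborel _ "\<lambda>x. \<bar>g x - avg g a b\<bar>"]) auto

lemma mean_osc_le_even:
  fixes g :: "real \<Rightarrow> real"
  assumes even: "\<And>x. g (- x) = g x" and nonneg: "\<And>x. 0 \<le> g x"
    and int: "\<And>a b. set_integrable lborel {a..b} g"
    and halfline: "\<And>a b. 0 \<le> a \<Longrightarrow> a < b \<Longrightarrow> mean_osc g a b \<le> e * avg g a b"
    and "e \<le> 2" and "a < b"
  shows "mean_osc g a b \<le> (1 + e/2) * avg g a b"
proof -
  have even_fun: "(\<lambda>x. g (- x)) = g" using even by simp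
  have right_heavy: "mean_osc g a b \<le> (1 + e/2) * avg g a b" if "a < b" "- a \<le> b" for a b
  proof (cases "0 \<le> a")
    case True
    have "0 \<le> avg g a b" using \<open>a < b\<close> nonneg by (intro avg_nonneg) auto
    then have "e * avg g a b \<le> (1 + e/2) * avg g a b"
      using \<open>e \<le> 2\<close> by (intro mult_right_mono) auto
    then show ?thesis using halfline[OF True \<open>a < b\<close>] by linarith
  next
    case False
    have "(LINT x:{a..0}|lborel. g x) = (LINT x:{0..-a}|lborel. g x)"
      using set_integral_reflect_Icc[where h=g and c=0 and d="-a"] by (simp add: even)
    also have "\<dots> \<le> (LINT x:{0..b}|lborel. g x)"
      using \<open>- a \<le> b\<close> nonneg by (intro set_integral_mono_set_nonneg int) auto
    finally have "(LINT x:{a..b}|lborel. g x) \<le> 2 * (LINT x:{0..b}|lborel. g x)"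
      using set_integral_split_Icc[of a 0 b g] False \<open>- a \<le> b\<close> int by simp
    then show ?thesis
      using False that nonneg halfline[of 0 b] \<open>e \<le> 2\<close>
      by (intro mean_osc_le_of_large_subinterval[where c=0 and d=b] int) auto
  qed
  show ?thesis
  proof (cases "- a \<le> b")
    case False
    then have "mean_osc g (- b) (- a) \<le> (1 + e/2) * avg g (- b) (- a)"
      using \<open>a < b\<close> by (intro right_heavy) auto
    then show ?thesis
      using mean_osc_reflect[of g a b] avg_reflect[of g a b] by (simp add: even_fun)
  qed (use right_heavy \<open>a < b\<close> in auto)
qed

lemma GR_even_extension:
  assumes "e \<le> 2" and f: "GR {0..} e f"
  shows "GR UNIV (1 + e/2) (\<lambda>x. f \<bar>x\<bar>)"
proof -
  define g where "g x = f \<bar>x\<bar>" for x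
  have f_nonneg: "\<And>x. 0 \<le> x \<Longrightarrow> 0 \<le> f x"
    and f_int: "\<And>a b. 0 \<le> a \<Longrightarrow> 0 \<le> b \<Longrightarrow> set_integrable lborel {a..b} f"
    and f_osc: "\<And>a b. 0 \<le> a \<Longrightarrow> a < b \<Longrightarrow> mean_osc f a b \<le> e * avg f a b"
    using f unfolding GR_def by auto
  have g_eq_f: "x \<in> {a..b} \<Longrightarrow> g x = f x" if "0 \<le> a" for a b x
    using that by (simp add: g_def)
  have g_halfline: "mean_osc g a b = mean_osc f a b" "avg g a b = avg f a b" if "0 \<le> a" for a b
    using g_eq_f[OF that] by (auto intro!: mean_osc_cong avg_cong)
  have even: "\<And>x. g (- x) = g x" by (simp add: g_def)
  have int_halfline: "set_integrable lborel {a..b} g" if "0 \<le> a" for a b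
  proof -
    have "set_integrable lborel {a..max a b} g"
      using f_int[of a "max a b"] g_eq_f[OF that] that
      by (subst set_integrable_cong[where f'=f]) auto
    then show ?thesis by (rule set_integrable_subset) auto
  qed
  have int: "set_integrable lborel {a..b} g" for a b
  proof -
    consider "0 \<le> a" | "b \<le> 0" | "a < 0" "0 < b" by linarith
    then show ?thesis
    proof cases
      case 2
      then show ?thesis
        using set_integrable_reflect_Icc[OF int_halfline[of "- b" "- a"]] by (simp add: even)
    next
      case 3
      have "set_integrable lborel {a..0} g"
        using set_integrable_reflect_Icc[where h=g and c=a and d=0] int_halfline[of 0 "- a"]
        by (simp add: even)
      then have "set_integrable lborel ({a..0} \<union> {0..b}) g"
        by (rule set_integrable_Un) (auto intro: int_halfline)
      moreover have "{a..0} \<union> {0..b} = {a..b}" using 3 by auto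
      ultimately show ?thesis by simp
    qed (use int_halfline in auto)
  qed
  have "mean_osc g a b \<le> e * avg g a b" if "0 \<le> a" "a < b" for a b
    using f_osc[OF that] g_halfline[OF \<open>0 \<le> a\<close>] by simp
  then have "mean_osc g a b \<le> (1 + e/2) * avg g a b" if "a < b" for a b
    using that even f_nonneg \<open>e \<le> 2\<close> int by (intro mean_osc_le_even) (auto simp: g_def)
  then show ?thesis
    unfolding GR_def g_def[symmetric] using int f_nonneg by (auto simp: g_def)
qed

theorem lemma2p1:
  fixes eps :: real
  assumes "0 < eps" and "eps < 2"
  shows "\<exists>eps'. 0 < eps' \<and> eps' < 2 \<and>
           (\<forall>f :: real \<Rightarrow> real.
              (mono_on {0..} f \<or> antimono_on {0..} f) \<and> GR {0..} eps f
              \<longrightarrow> GR UNIV eps' (\<lambda>x. f \<bar>x\<bar>))"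
proof (intro exI[of _ "1 + eps/2"] conjI allI impI)
  show "0 < 1 + eps/2" "1 + eps/2 < 2" using assms by auto
  fix f :: "real \<Rightarrow> real"
  assume "(mono_on {0..} f \<or> antimono_on {0..} f) \<and> GR {0..} eps f"
  then show "GR UNIV (1 + eps/2) (\<lambda>x. f \<bar>x\<bar>)"
    using assms by (intro GR_even_extension) auto
qed

end
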